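(* Let $R\in\mathbb{R}^{m\times N}$, $\lambda\ge 0$, and let $\sigma_1$ be the largest singular value of $R$, with corresponding left singular vector $u^1\in\mathbb{R}^m$ and right singular vector $v_1\in\mathbb{R}^{N}$ (unit vectors with $R v_1=\sigma_1 u^1$). Consider the problem $$\min_{d\in\mathbb{R}^m,\ \|d\|_2=1,\ x\in\mathbb{R}^{1\times N}}\ \frac12\|d\,x-R\|_F^2+\lambda\|x\|_2 .$$ If $\sigma_1\ge\lambda$, then $(d,x)=(u^1,(\sigma_1-\lambda)v_1^T)$ is a minimizer. Otherwise (if $\sigma_1<\lambda$), for any $d_0\in\mathbb{R}^m$ with $\|d_0\|_2=1$, the pair $(d_0,0)$ is a minimizer; in particular the optimal row $x$ is zero.
   Context: This is the per-atom update of a K-SVD-type dictionary learning scheme with the row-sparsity ($\ell_{2,1}$) penalty $\lambda\sum_j\|x_j\|_2$, where $R$ is the residual after removing the contribution of the current atom; in the paper $d_0$ is the current (previous) atom. *)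

theory Defs
  imports "HOL-Analysis.Analysis"
begin

definition singular_triple :: "real^'n^'m \<Rightarrow> real \<Rightarrow> real^'m \<Rightarrow> real^'n \<Rightarrow> bool" where
  "singular_triple R s u v \<longleftrightarrow> s \<ge> 0 \<and> norm u = 1 \<and> norm v = 1 \<and>
     R *v v = s *\<^sub>R u \<and> transpose R *v u = s *\<^sub>R v"

definition largest_singular_triple :: "real^'n^'m \<Rightarrow> real \<Rightarrow> real^'m \<Rightarrow> real^'n \<Rightarrow> bool" where
  "largest_singular_triple R s u v \<longleftrightarrow> singular_triple R s u v \<and>
     (\<forall>s' u' v'. singular_triple R s' u' v' \<longrightarrow> s' \<le> s)"

definition frob_sq_resid :: "real^'m \<Rightarrow> real^'n \<Rightarrow> real^'n^'m \<Rightarrow> real" where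
  "frob_sq_resid d x R = (\<Sum>i\<in>UNIV. \<Sum>j\<in>UNIV. (d $ i * x $ j - R $ i $ j)^2)"

definition atom_obj :: "real \<Rightarrow> real^'n^'m \<Rightarrow> real^'m \<Rightarrow> real^'n \<Rightarrow> real" where
  "atom_obj lam R d x = frob_sq_resid d x R / 2 + lam * norm x"

definition is_minimizer :: "real \<Rightarrow> real^'n^'m \<Rightarrow> real^'m \<Rightarrow> real^'n \<Rightarrow> bool" where
  "is_minimizer lam R d x \<longleftrightarrow> norm d = 1 \<and>
     (\<forall>d' x'. norm d' = 1 \<longrightarrow> atom_obj lam R d x \<le> atom_obj lam R d' x')"

end

theory Submission
  imports Defs
begin

(*
  For a unit atom d the objective equals
    |R|_F^2/2 + |x|^2/2 - <d, R x> + lam |x|,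
  and <d, R x> = <R^T d, x> <= s1 |x| because s1 bounds the operator norm of R^T.
  Hence the objective is at least |R|_F^2/2 + r^2/2 - (s1 - lam) r with r = |x|,
  a parabola in r >= 0 minimised at r = max 0 (s1 - lam); the two candidate pairs
  attain exactly this minimum.  The operator-norm bound comes from a unit vector d
  maximising |R^T d|: it is an eigenvector of R R^T, which turns it into a singular
  triple, whose value cannot exceed the largest one s1.
*)

lemma linear_coeff_zero_if_quadratic_nonneg:
  fixes c K :: real
  assumes "\<And>t. 0 \<le> 2 * t * c + t^2 * K"
  shows "c = 0"
proof (rule ccontr)
  assume "c \<noteq> 0"
  define t where "t = \<bar>c\<bar> / (\<bar>K\<bar> + 1)"
  have "t > 0" using \<open>c \<noteq> 0\<close> by (simp add: t_def)
  have "2 * t * \<bar>c\<bar> \<le> t^2 * K"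
    using assms[of t] assms[of "-t"] by (cases "c \<ge> 0") (auto simp: power2_eq_square)
  then have "2 * \<bar>c\<bar> \<le> t * \<bar>K\<bar>"
    using \<open>t > 0\<close> by (simp add: power2_eq_square)
      (smt (verit) mult_le_cancel_left_pos abs_ge_self mult_left_mono)
  also have "t * \<bar>K\<bar> < \<bar>c\<bar>"
    using \<open>c \<noteq> 0\<close> by (simp add: t_def field_simps)
  finally show False by simp
qed

lemma norm_add_scaleR_squared:
  fixes p q :: "'a::real_inner"
  shows "(norm (p + t *\<^sub>R q))^2 = (norm p)^2 + 2 * t * inner p q + t^2 * (norm q)^2"
  unfolding power2_norm_eq_inner
  by (simp add: inner_add_left inner_add_right inner_commute algebra_simps power2_eq_square)

lemma exists_unit_vector_maximizing_norm:
  fixes M :: "real^'n^'m"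
  obtains d where "norm d = 1" "\<And>y. norm (M *v y) \<le> norm (M *v d) * norm y"
proof -
  have "continuous_on (sphere 0 1) (\<lambda>y. norm (M *v y))"
    by (intro continuous_intros)
  moreover have "sphere (0::real^'n) 1 \<noteq> {}" by simp
  ultimately obtain d where d: "d \<in> sphere 0 1"
    and max: "\<And>y. y \<in> sphere 0 1 \<Longrightarrow> norm (M *v y) \<le> norm (M *v d)"
    using continuous_attains_sup[OF compact_sphere] by blast
  have "norm (M *v y) \<le> norm (M *v d) * norm y" for y
  proof (cases "y = 0")
    case False
    then have "norm (M *v (y /\<^sub>R norm y)) \<le> norm (M *v d)" by (intro max) simp
    with False show ?thesis by (simp add: matrix_vector_mult_scaleR field_simps)
  qed simp
  with d show thesis using that by simp
qed

lemma eigenvector_if_maximizes_norm_ratio: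
  fixes M :: "real^'n^'m"
  assumes unit: "norm d = 1" and max: "\<And>y. norm (M *v y) \<le> norm (M *v d) * norm y"
  shows "transpose M *v (M *v d) = (norm (M *v d))^2 *\<^sub>R d"
proof -
  define \<mu> where "\<mu> = (norm (M *v d))^2"
  have "inner (\<mu> *\<^sub>R d - transpose M *v (M *v d)) y = 0" for y
  proof -
    have "0 \<le> 2 * t * (\<mu> * inner d y - inner (M *v d) (M *v y))
                + t^2 * (\<mu> * (norm y)^2 - (norm (M *v y))^2)" for t
    proof -
      have "(norm (M *v (d + t *\<^sub>R y)))^2 \<le> \<mu> * (norm (d + t *\<^sub>R y))^2"
        using max[of "d + t *\<^sub>R y"] unfolding \<mu>_def
        by (metis norm_ge_zero power_mono power_mult_distrib)
      then show ?thesis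
        unfolding matrix_vector_right_distrib matrix_vector_mult_scaleR norm_add_scaleR_squared
        using unit by (simp add: \<mu>_def algebra_simps)
    qed
    then have "\<mu> * inner d y = inner (M *v d) (M *v y)"
      using linear_coeff_zero_if_quadratic_nonneg by fastforce
    then show ?thesis
      by (simp add: inner_diff_left dot_lmul_matrix)
  qed
  from this[of "\<mu> *\<^sub>R d - transpose M *v (M *v d)"] show ?thesis
    by (simp add: \<mu>_def)
qed

lemma norm_transpose_mult_le_largest_singular_value:
  fixes R :: "real^'n^'m"
  assumes "largest_singular_triple R s1 u1 v1"
  shows "norm (transpose R *v y) \<le> s1 * norm y"
proof -
  obtain d where unit: "norm d = 1"
    and max: "\<And>y. norm (transpose R *v y) \<le> norm (transpose R *v d) * norm y"
    using exists_unit_vector_maximizing_norm by blast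
  define s where "s = norm (transpose R *v d)"
  have "s \<le> s1"
  proof (cases "s = 0")
    case True
    then show ?thesis using assms by (simp add: largest_singular_triple_def singular_triple_def)
  next
    case False
    have "singular_triple R s d ((1 / s) *\<^sub>R (transpose R *v d))"
      unfolding singular_triple_def
      using eigenvector_if_maximizes_norm_ratio[OF unit max] False unit
      by (simp add: s_def matrix_vector_mult_scaleR power2_eq_square)
    then show ?thesis using assms by (auto simp: largest_singular_triple_def)
  qed
  then show ?thesis
    using max[of y] by (simp add: s_def) (meson mult_right_mono norm_ge_zero order_trans)
qed

definition frob_norm_sq :: "real^'n^'m \<Rightarrow> real" where
  "frob_norm_sq R = (\<Sum>i\<in>UNIV. \<Sum>j\<in>UNIV. (R $ i $ j)^2)"

lemma frob_sq_resid_eq: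
  fixes d :: "real^'m" and x :: "real^'n" and R :: "real^'n^'m"
  shows "frob_sq_resid d x R = (norm d)^2 * (norm x)^2 - 2 * inner d (R *v x) + frob_norm_sq R"
  unfolding frob_sq_resid_def frob_norm_sq_def
    power2_norm_eq_inner inner_vec_def matrix_vector_mult_def
  by (simp add: power2_eq_square algebra_simps sum.distrib sum_subtractf sum_distrib_left
      sum_distrib_right) (rule sum.swap)

lemma atom_obj_unit_eq:
  assumes "norm d = 1"
  shows "atom_obj lam R d x = frob_norm_sq R / 2 + (norm x)^2 / 2 - inner d (R *v x) + lam * norm x"
  using assms by (simp add: atom_obj_def frob_sq_resid_eq field_simps)

lemma atom_obj_lower_bound:
  assumes "norm d = 1" and "largest_singular_triple R s1 u1 v1"
  shows "frob_norm_sq R / 2 + (norm x)^2 / 2 - (s1 - lam) * norm x \<le> atom_obj lam R d x"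
proof -
  have "inner d (R *v x) = inner (transpose R *v d) x"
    by (simp add: dot_lmul_matrix)
  also have "\<dots> \<le> norm (transpose R *v d) * norm x"
    by (rule norm_cauchy_schwarz)
  also have "\<dots> \<le> s1 * norm x"
    using norm_transpose_mult_le_largest_singular_value[OF assms(2), of d] assms(1)
    by (simp add: mult_right_mono)
  finally show ?thesis
    using atom_obj_unit_eq[OF assms(1), of lam R x] by (simp add: algebra_simps)
qed

lemma is_minimizerI:
  assumes "norm d = 1" and "largest_singular_triple R s1 u1 v1"
    and "\<And>r. r \<ge> 0 \<Longrightarrow> atom_obj lam R d x \<le> frob_norm_sq R / 2 + r^2 / 2 - (s1 - lam) * r"
  shows "is_minimizer lam R d x"
  unfolding is_minimizer_def
  using assms order_trans[OF assms(3)[of "norm _"] atom_obj_lower_bound[OF _ assms(2)]] by simp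

lemma atom_obj_largest_singular_pair:
  assumes "singular_triple R s1 u1 v1" and "lam \<le> s1"
  shows "atom_obj lam R u1 ((s1 - lam) *\<^sub>R v1) = frob_norm_sq R / 2 - (s1 - lam)^2 / 2"
proof -
  have unit: "norm u1 = 1" and "norm v1 = 1" and "R *v v1 = s1 *\<^sub>R u1"
    using assms(1) by (auto simp: singular_triple_def)
  define x where "x = (s1 - lam) *\<^sub>R v1"
  have norm_x: "norm x = s1 - lam" and inner_x: "inner u1 (R *v x) = (s1 - lam) * s1"
    using unit \<open>norm v1 = 1\<close> \<open>R *v v1 = s1 *\<^sub>R u1\<close> assms(2)
    by (simp_all add: x_def matrix_vector_mult_scaleR power2_norm_eq_inner[symmetric])
  show ?thesis
    unfolding atom_obj_unit_eq[OF unit] x_def[symmetric] norm_x inner_x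
    by (simp add: power2_eq_square algebra_simps)
qed

theorem proposition2:
  fixes R :: "real^'n^'m" and lam s1 :: real and u1 :: "real^'m" and v1 :: "real^'n"
  assumes "lam \<ge> 0"
    and "largest_singular_triple R s1 u1 v1"
  shows "(s1 \<ge> lam \<longrightarrow> is_minimizer lam R u1 ((s1 - lam) *\<^sub>R v1))
       \<and> (s1 < lam \<longrightarrow> (\<forall>d0::real^'m. norm d0 = 1 \<longrightarrow> is_minimizer lam R d0 0))"
proof (intro conjI impI allI)
  have triple: "singular_triple R s1 u1 v1"
    using assms(2) by (simp add: largest_singular_triple_def)
  show "is_minimizer lam R u1 ((s1 - lam) *\<^sub>R v1)" if "lam \<le> s1"
  proof (rule is_minimizerI[OF _ assms(2)])
    show "norm u1 = 1" using triple by (simp add: singular_triple_def)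
    show "atom_obj lam R u1 ((s1 - lam) *\<^sub>R v1) \<le> frob_norm_sq R / 2 + r^2 / 2 - (s1 - lam) * r" for r
      unfolding atom_obj_largest_singular_pair[OF triple that]
      using zero_le_power2[of "r - (s1 - lam)"] by (simp only: power2_diff) argo
  qed
  show "is_minimizer lam R d0 0" if "s1 < lam" and "norm d0 = 1" for d0 :: "real^'m"
  proof (rule is_minimizerI[OF \<open>norm d0 = 1\<close> assms(2)])
    show "atom_obj lam R d0 0 \<le> frob_norm_sq R / 2 + r^2 / 2 - (s1 - lam) * r" if "r \<ge> 0" for r
    proof -
      have "(s1 - lam) * r \<le> 0"
        using \<open>s1 < lam\<close> \<open>r \<ge> 0\<close> by (simp add: mult_nonpos_nonneg)
      then show ?thesis
        unfolding atom_obj_unit_eq[OF \<open>norm d0 = 1\<close>] by simp (smt (verit) zero_le_power2)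
    qed
  qed
qed

end
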